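(* Let $N\ge1$ and let $f_1,\dots,f_{2N+2}:\mathbb{R}\to\mathbb{R}$ be continuous convex functions. Let $v_1=\min(f_1,\dots,f_{N+1})$, $v_2=\min(f_{N+2},\dots,f_{2N+2})$ and $v=\max(v_1,v_2)$. Then $$\mathcal{C}_v\subseteq \Psi_v:=\Big(\bigcup_{1\le i\le 2N+2}\mathcal{C}_{f_i}\Big)\cup\Big(\bigcup_{1\le i<j\le 2N+2}\mathcal{S}_{f_i,f_j}\Big).$$ Moreover, if $v$ attains its global minimum on $\mathbb{R}$, then the minimum of $v(x)$ over the set $\{x : (x,y)\in\Psi_v,\ v(x)=y\}$ is attained and equals $\min_{x\in\mathbb{R}}v(x)$; in particular a global minimizer of $v$ is given by $$x^*_v\in\arg\min_x\{v(x): (x,y)\in\Psi_v,\ v(x)=y\}.$$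
   Context: For a continuous function $g:\mathbb{R}\to\mathbb{R}$, a critical point of $g$ is a point $(x,g(x))$ such that either $g$ is not differentiable at $x$ or $g'(x)=0$; $\mathcal{C}_g$ denotes the set of critical points of $g$. For two functions $g,h:\mathbb{R}\to\mathbb{R}$, $\mathcal{S}_{g,h}=\{(x,g(x)):x\in\mathbb{R},\ g(x)=h(x)\}$. Minima and maxima of functions are taken pointwise. *)

theory Defs
  imports "HOL-Analysis.Analysis"
begin

definition crit_pts :: "(real \<Rightarrow> real) \<Rightarrow> (real \<times> real) set" where
  "crit_pts g = {(x, g x) | x. \<not> (g differentiable (at x)) \<or> (g has_real_derivative 0) (at x)}"

definition inter_pts :: "(real \<Rightarrow> real) \<Rightarrow> (real \<Rightarrow> real) \<Rightarrow> (real \<times> real) set" where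
  "inter_pts g h = {(x, g x) | x. g x = h x}"

end

theory Submission
  imports Defs
begin

text \<open>Take a critical point x of v and an index k with v x = f_k x. If some other f_i
also takes this value at x, the point lies on the graph intersection S_{f_i,f_k}. Otherwise,
by continuity, every f_i stays strictly on its side of f_k near x, so the max-min expression
selects f_k on a whole neighbourhood of x; then v and f_k have the same derivatives at x and
x is critical for f_k. A global minimiser of v is a critical point of v, hence lies in Psi,
which gives the second claim.\<close>

lemma mem_crit_pts_iff:
  "(x, y) \<in> crit_pts g \<longleftrightarrow>
     y = g x \<and> (\<not> g differentiable (at x) \<or> (g has_real_derivative 0) (at x))"
  unfolding crit_pts_def by auto

lemma inter_pts_commute: "inter_pts g h = inter_pts h g"
  unfolding inter_pts_def by auto

lemma UN_inter_pts_distinct_eq_ordered: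
  fixes g :: "'i::linorder \<Rightarrow> real \<Rightarrow> real"
  shows "(\<Union>i\<in>I. \<Union>j\<in>I - {i}. inter_pts (g i) (g j)) =
         (\<Union>i\<in>I. \<Union>j\<in>{j \<in> I. i < j}. inter_pts (g i) (g j))"
  (is "?L = ?R")
proof
  show "?L \<subseteq> ?R"
  proof (intro UN_least)
    fix i j assume "i \<in> I" "j \<in> I - {i}"
    then consider "i < j" | "j < i"
      by (metis Diff_iff singletonI neqE)
    then show "inter_pts (g i) (g j) \<subseteq> ?R"
      using \<open>i \<in> I\<close> \<open>j \<in> I - {i}\<close> inter_pts_commute[of "g i" "g j"] by cases auto
  qed
qed auto

lemma crit_pts_eventually_eq:
  assumes eq: "eventually (\<lambda>y. g y = h y) (at x)" "g x = h x"
    and crit: "(x, g x) \<in> crit_pts g"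
  shows "(x, h x) \<in> crit_pts h"
proof -
  have deriv_iff: "(g has_real_derivative D) (at x) \<longleftrightarrow> (h has_real_derivative D) (at x)" for D
    using has_field_derivative_cong_eventually[OF eq] .
  then have "g differentiable (at x) \<longleftrightarrow> h differentiable (at x)"
    by (simp add: real_differentiable_def)
  with crit deriv_iff show ?thesis
    by (simp add: mem_crit_pts_iff)
qed

lemma global_minimizer_in_crit_pts:
  fixes g :: "real \<Rightarrow> real"
  assumes min: "\<forall>z. g x \<le> g z"
  shows "(x, g x) \<in> crit_pts g"
proof (cases "g differentiable (at x)")
  case True
  then obtain D where D: "(g has_real_derivative D) (at x)"
    by (auto simp: real_differentiable_def)
  have "D = 0"
    by (rule DERIV_local_min[OF D zero_less_one]) (use min in blast)
  with D show ?thesis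
    by (simp add: mem_crit_pts_iff)
qed (simp add: mem_crit_pts_iff)

lemma max_Min_eq_when_order_preserved_left:
  fixes a b :: "'i \<Rightarrow> real"
  assumes fin: "finite A" "finite B" and ne: "B \<noteq> {}" and disj: "A \<inter> B = {}"
    and k: "k \<in> A"
    and active: "max (Min (a ` A)) (Min (a ` B)) = a k"
    and unique: "\<forall>i\<in>A \<union> B. i \<noteq> k \<longrightarrow> a i \<noteq> a k"
    and below: "\<forall>i\<in>A \<union> B. a i < a k \<longrightarrow> b i < b k"
    and above: "\<forall>i\<in>A \<union> B. a k < a i \<longrightarrow> b k < b i"
  shows "max (Min (b ` A)) (Min (b ` B)) = b k"
proof -
  have "Min (a ` B) \<in> a ` B"
    using fin ne by (intro Min_in) auto
  then obtain j where j: "j \<in> B" "a j = Min (a ` B)"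
    by auto
  have "a j \<noteq> a k"
    using unique j k disj by auto
  then have "a j < a k" and min_A: "Min (a ` A) = a k"
    using active j by (auto simp: max_def split: if_splits)
  have "b k \<le> b i" if "i \<in> A" for i
  proof -
    have "a k \<le> a i"
      using min_A Min_le[of "a ` A" "a i"] fin that by simp
    with unique above that show ?thesis
      by (cases "i = k") (auto simp: order.strict_iff_order)
  qed
  then have "Min (b ` A) = b k"
    using fin k by (intro Min_eqI) auto
  moreover have "Min (b ` B) \<le> b j"
    using fin j by (intro Min_le) auto
  moreover have "b j < b k"
    using below j \<open>a j < a k\<close> by blast
  ultimately show ?thesis
    by simp
qed

lemma max_Min_eq_when_order_preserved:
  fixes a b :: "'i \<Rightarrow> real"
  assumes fin: "finite A" "finite B" and ne: "A \<noteq> {}" "B \<noteq> {}" and disj: "A \<inter> B = {}"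
    and k: "k \<in> A \<union> B"
    and active: "max (Min (a ` A)) (Min (a ` B)) = a k"
    and unique: "\<forall>i\<in>A \<union> B. i \<noteq> k \<longrightarrow> a i \<noteq> a k"
    and below: "\<forall>i\<in>A \<union> B. a i < a k \<longrightarrow> b i < b k"
    and above: "\<forall>i\<in>A \<union> B. a k < a i \<longrightarrow> b k < b i"
  shows "max (Min (b ` A)) (Min (b ` B)) = b k"
proof (cases "k \<in> A")
  case True
  then show ?thesis
    by (rule max_Min_eq_when_order_preserved_left[OF fin ne(2) disj _ active unique below above])
next
  case False
  with k have "k \<in> B" by blast
  moreover have "B \<inter> A = {}"
    using disj by blast
  moreover have "max (Min (a ` B)) (Min (a ` A)) = a k"
    using active by (simp only: max.commute)
  ultimately have "max (Min (b ` B)) (Min (b ` A)) = b k"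
    using max_Min_eq_when_order_preserved_left[OF fin(2,1) ne(1)]
      unique below above unfolding Un_commute[of A B] by blast
  then show ?thesis
    by (simp only: max.commute)
qed

lemma eventually_strict_order_preserved:
  fixes f :: "'i \<Rightarrow> 'a::t2_space \<Rightarrow> real"
  assumes "finite I" and cont: "\<forall>i\<in>I. isCont (f i) x" "isCont (f k) x"
  shows "eventually (\<lambda>y. \<forall>i\<in>I. (f i x < f k x \<longrightarrow> f i y < f k y) \<and>
                                (f k x < f i x \<longrightarrow> f k y < f i y)) (at x)"
  using \<open>finite I\<close>
proof (rule eventually_ball_finite, intro ballI eventually_conj)
  fix i assume "i \<in> I"
  then have lim: "((\<lambda>y. f i y - f k y) \<longlongrightarrow> f i x - f k x) (at x)"
    using cont by (intro isContD continuous_intros) auto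
  show "eventually (\<lambda>y. f i x < f k x \<longrightarrow> f i y < f k y) (at x)"
  proof (cases "f i x < f k x")
    case True
    then have "eventually (\<lambda>y. f i y - f k y < 0) (at x)"
      by (intro order_tendstoD(2)[OF lim]) simp
    then show ?thesis
      by (rule eventually_mono) simp
  qed simp
  show "eventually (\<lambda>y. f k x < f i x \<longrightarrow> f k y < f i y) (at x)"
  proof (cases "f k x < f i x")
    case True
    then have "eventually (\<lambda>y. 0 < f i y - f k y) (at x)"
      by (intro order_tendstoD(1)[OF lim]) simp
    then show ?thesis
      by (rule eventually_mono) simp
  qed simp
qed

lemma crit_pts_max_Min_subset:
  fixes f :: "'i \<Rightarrow> real \<Rightarrow> real"
  assumes fin: "finite A" "finite B" and ne: "A \<noteq> {}" "B \<noteq> {}" and disj: "A \<inter> B = {}"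
    and cont: "\<And>i. i \<in> A \<union> B \<Longrightarrow> continuous_on UNIV (f i)"
  defines "v \<equiv> \<lambda>x. max (Min ((\<lambda>i. f i x) ` A)) (Min ((\<lambda>i. f i x) ` B))"
  shows "crit_pts v \<subseteq> (\<Union>i\<in>A \<union> B. crit_pts (f i)) \<union>
                        (\<Union>i\<in>A \<union> B. \<Union>j\<in>A \<union> B - {i}. inter_pts (f i) (f j))"
proof safe
  fix x y
  assume crit: "(x, y) \<in> crit_pts v"
    and no_inter: "(x, y) \<notin> (\<Union>i\<in>A \<union> B. \<Union>j\<in>A \<union> B - {i}. inter_pts (f i) (f j))"
  then have y: "y = v x"
    by (simp add: mem_crit_pts_iff)
  have "Min ((\<lambda>i. f i x) ` A) \<in> (\<lambda>i. f i x) ` A" "Min ((\<lambda>i. f i x) ` B) \<in> (\<lambda>i. f i x) ` B"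
    using fin ne by (intro Min_in; simp)+
  then have "v x \<in> (\<lambda>i. f i x) ` (A \<union> B)"
    unfolding v_def max_def by auto
  then obtain k where k: "k \<in> A \<union> B" "v x = f k x"
    by blast
  have unique: "\<forall>i\<in>A \<union> B. i \<noteq> k \<longrightarrow> f i x \<noteq> f k x"
  proof (intro ballI impI notI)
    fix i assume i: "i \<in> A \<union> B" "i \<noteq> k" "f i x = f k x"
    then have "(x, y) \<in> inter_pts (f i) (f k)"
      using k y by (auto simp: inter_pts_def)
    with no_inter i k show False
      by blast
  qed
  have active: "max (Min ((\<lambda>i. f i x) ` A)) (Min ((\<lambda>i. f i x) ` B)) = f k x"
    using k(2) by (simp add: v_def)
  have "\<forall>i\<in>A \<union> B. isCont (f i) x"
    using cont by (simp add: continuous_on_eq_continuous_at)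
  then have "eventually (\<lambda>y. \<forall>i\<in>A \<union> B. (f i x < f k x \<longrightarrow> f i y < f k y) \<and>
                                    (f k x < f i x \<longrightarrow> f k y < f i y)) (at x)"
    using fin k by (intro eventually_strict_order_preserved) auto
  then have "eventually (\<lambda>y. v y = f k y) (at x)"
  proof (rule eventually_mono)
    fix z assume "\<forall>i\<in>A \<union> B. (f i x < f k x \<longrightarrow> f i z < f k z) \<and> (f k x < f i x \<longrightarrow> f k z < f i z)"
    then show "v z = f k z"
      unfolding v_def
      by (intro max_Min_eq_when_order_preserved[OF fin ne disj k(1) active unique]) auto
  qed
  then have "(x, f k x) \<in> crit_pts (f k)"
    using crit_pts_eventually_eq[where g = v and h = "f k"] crit k(2) y by simp
  with k y show "(x, y) \<in> (\<Union>i\<in>A \<union> B. crit_pts (f i))"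
    by auto
qed

theorem corollary1:
  fixes N :: nat and f :: "nat \<Rightarrow> real \<Rightarrow> real" and v :: "real \<Rightarrow> real"
    and Psi :: "(real \<times> real) set"
  assumes "N \<ge> 1"
    and "\<And>i. i \<in> {1..2*N+2} \<Longrightarrow> continuous_on UNIV (f i)"
    and "\<And>i. i \<in> {1..2*N+2} \<Longrightarrow> convex_on UNIV (f i)"
    and v_def: "v = (\<lambda>x. max (Min {f i x | i. i \<in> {1..N+1}}) (Min {f i x | i. i \<in> {N+2..2*N+2}}))"
    and Psi_def: "Psi = (\<Union>i\<in>{1..2*N+2}. crit_pts (f i)) \<union>
                    (\<Union>i\<in>{1..2*N+2}. \<Union>j\<in>{i<..2*N+2}. inter_pts (f i) (f j))"
  shows "crit_pts v \<subseteq> Psi \<and>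
         ((\<exists>x. \<forall>z. v x \<le> v z) \<longrightarrow>
            (\<exists>x0 \<in> {x. (x, v x) \<in> Psi}. (\<forall>z \<in> {x. (x, v x) \<in> Psi}. v x0 \<le> v z) \<and> (\<forall>z. v x0 \<le> v z)) \<and>
            (\<forall>xs \<in> {x. (x, v x) \<in> Psi}. (\<forall>z \<in> {x. (x, v x) \<in> Psi}. v xs \<le> v z) \<longrightarrow> (\<forall>z. v xs \<le> v z)))"
proof -
  let ?A = "{1..N+1}" and ?B = "{N+2..2*N+2}" and ?I = "{1..2*N+2}"
  have v: "v = (\<lambda>x. max (Min ((\<lambda>i. f i x) ` ?A)) (Min ((\<lambda>i. f i x) ` ?B)))"
    unfolding v_def by (simp only: setcompr_eq_image Collect_mem_eq)
  have "?A \<union> ?B = ?I" and "\<And>i. {j \<in> ?I. i < j} = {i<..2*N+2}"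
    by auto
  then have crit_v: "crit_pts v \<subseteq> Psi"
    using crit_pts_max_Min_subset[of ?A ?B f] assms(2)
    unfolding v Psi_def UN_inter_pts_distinct_eq_ordered by simp
  moreover have "(x, v x) \<in> Psi" if "\<forall>z. v x \<le> v z" for x
    using global_minimizer_in_crit_pts[OF that] crit_v by blast
  ultimately show ?thesis
    by (metis (mono_tags, lifting) mem_Collect_eq order_trans)
qed

end
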